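(* Let $\mathsf{X}$ be a finite connected graph with no tails and with $l$ ramified vertices, and suppose $\mathsf{X}$ has a segment decomposition into segments $\mathsf{S}^1,\dots,\mathsf{S}^k$, where $\mathsf{S}^1,\dots,\mathsf{S}^{k'}$ are the 2-segments and $\mathsf{S}^{k'+1},\dots,\mathsf{S}^k$ the 1-segments. Let $\mathsf{T}$ be a spanning tree of $\mathsf{X}$ and set $\mathsf{T}^i=\mathsf{T}\cap\mathsf{S}^i$. Then $\mathsf{T}^i$ is a spanning tree of the 2-segment $\mathsf{S}^i$ for exactly $l-1$ indices $i$.
   Context: Graphs are finite and undirected, possibly with multiple edges and loops. Some vertices are designated ramified; the others are unramified. A tail is an unramified vertex with exactly one neighbour joined to it by exactly one edge. For ramified $v,v'$, an admissible path from $v$ to $v'$ is a path whose intermediate vertices are all unramified (closed if $v=v'$). Segment decomposition: colour each admissible path between distinct ramified vertices so that paths sharing an edge receive the same colour; this must be possible with all paths of a colour joining the same pair of ramified vertices, and each colour class (union of its paths) is a 2-segment (contains exactly two ramified vertices). Every remaining edge lies on an admissible closed path at one ramified vertex through unramified vertices not in any 2-segment; colouring these closed paths likewise (paths sharing an edge get the same colour, no already coloured edge reused) gives the 1-segments (exactly one ramified vertex). The segments are pairwise edge-disjoint, share no unramified vertex, and cover $\mathsf{X}$; a segment with $t$ ramified vertices is a $t$-segment. *)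

theory Defs
  imports Main
begin

text \<open>Finite multigraphs (multiple edges and loops allowed): a vertex set V, an edge
set E, and for every edge its set of end vertices (a singleton for a loop).\<close>

definition multigraph :: "'v set \<Rightarrow> 'e set \<Rightarrow> ('e \<Rightarrow> 'v set) \<Rightarrow> bool" where
  "multigraph V E ends \<longleftrightarrow> finite V \<and> finite E \<and>
     (\<forall>e\<in>E. ends e \<subseteq> V \<and> 1 \<le> card (ends e) \<and> card (ends e) \<le> 2)"

definition walk :: "('e \<Rightarrow> 'v set) \<Rightarrow> 'e set \<Rightarrow> 'v list \<Rightarrow> 'e list \<Rightarrow> bool" where
  "walk ends F vs es \<longleftrightarrow> length vs = Suc (length es) \<and> set es \<subseteq> F \<and>
     (\<forall>i<length es. ends (es ! i) = {vs ! i, vs ! Suc i})"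

definition open_path :: "('e \<Rightarrow> 'v set) \<Rightarrow> 'e set \<Rightarrow> 'v list \<Rightarrow> 'e list \<Rightarrow> bool" where
  "open_path ends F vs es \<longleftrightarrow> walk ends F vs es \<and> es \<noteq> [] \<and> distinct vs"

text \<open>A closed path (cycle): nonempty closed walk, no repeated vertex except the
start = end, no repeated edge (so loops and pairs of parallel edges are cycles).\<close>
definition closed_path :: "('e \<Rightarrow> 'v set) \<Rightarrow> 'e set \<Rightarrow> 'v list \<Rightarrow> 'e list \<Rightarrow> bool" where
  "closed_path ends F vs es \<longleftrightarrow> walk ends F vs es \<and> es \<noteq> [] \<and> hd vs = last vs \<and>
     distinct (tl vs) \<and> distinct es"

definition inner :: "'v list \<Rightarrow> 'v set" where
  "inner vs = set (butlast (tl vs))"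

definition connected_on :: "('e \<Rightarrow> 'v set) \<Rightarrow> 'v set \<Rightarrow> 'e set \<Rightarrow> bool" where
  "connected_on ends V F \<longleftrightarrow> (\<forall>u\<in>V. \<forall>w\<in>V. \<exists>vs es.
      walk ends F vs es \<and> set vs \<subseteq> V \<and> hd vs = u \<and> last vs = w)"

definition is_tree :: "('e \<Rightarrow> 'v set) \<Rightarrow> 'v set \<Rightarrow> 'e set \<Rightarrow> bool" where
  "is_tree ends V F \<longleftrightarrow> (\<forall>e\<in>F. ends e \<subseteq> V) \<and> connected_on ends V F \<and>
     \<not> (\<exists>vs es. closed_path ends F vs es)"

definition neighbours :: "'e set \<Rightarrow> ('e \<Rightarrow> 'v set) \<Rightarrow> 'v \<Rightarrow> 'v set" where
  "neighbours E ends u = {w. \<exists>e\<in>E. ends e = {u, w}}"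

definition is_tail :: "'e set \<Rightarrow> ('e \<Rightarrow> 'v set) \<Rightarrow> 'v set \<Rightarrow> 'v \<Rightarrow> bool" where
  "is_tail E ends R u \<longleftrightarrow> u \<notin> R \<and>
     (\<exists>w. neighbours E ends u = {w} \<and> card {e\<in>E. ends e = {u, w}} = 1)"

definition adm2 :: "('e \<Rightarrow> 'v set) \<Rightarrow> 'e set \<Rightarrow> 'v set \<Rightarrow> ('v list \<times> 'e list) set" where
  "adm2 ends E R = {(vs, es). open_path ends E vs es \<and> hd vs \<in> R \<and> last vs \<in> R \<and>
      inner vs \<inter> R = {}}"

definition share_rel :: "('v list \<times> 'e list) set \<Rightarrow> (('v list \<times> 'e list) \<times> ('v list \<times> 'e list)) set" where
  "share_rel P = {(p, q). p \<in> P \<and> q \<in> P \<and> set (snd p) \<inter> set (snd q) \<noteq> {}}"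

definition colour_classes :: "('v list \<times> 'e list) set \<Rightarrow> ('v list \<times> 'e list) set set" where
  "colour_classes P = P // (share_rel P)\<^sup>+"

definition seg :: "('v list \<times> 'e list) set \<Rightarrow> 'v set \<times> 'e set" where
  "seg C = ((\<Union>p\<in>C. set (fst p)), (\<Union>p\<in>C. set (snd p)))"

text \<open>Segment decomposition; S2 is the set of 2-segments, S1 the set of 1-segments,
each segment given as a pair (vertex set, edge set).\<close>
definition segment_decomposition ::
  "'v set \<Rightarrow> 'e set \<Rightarrow> ('e \<Rightarrow> 'v set) \<Rightarrow> 'v set \<Rightarrow> ('v set \<times> 'e set) set \<Rightarrow> ('v set \<times> 'e set) set \<Rightarrow> bool" where
  "segment_decomposition V E ends R S2 S1 \<longleftrightarrow>
    (let P2 = adm2 ends E R;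
         cls2 = colour_classes P2;
         U2 = (\<Union>p\<in>P2. set (fst p));
         C2 = (\<Union>p\<in>P2. set (snd p));
         P1 = {(vs, es). closed_path ends E vs es \<and> hd vs \<in> R \<and>
                 inner vs \<subseteq> V - R - U2 \<and> set es \<inter> C2 = {}};
         cls1 = colour_classes P1
     in (\<forall>C\<in>cls2. \<exists>a b. \<forall>p\<in>C. {hd (fst p), last (fst p)} = {a, b})
      \<and> (\<forall>C\<in>cls2. card (fst (seg C) \<inter> R) = 2)
      \<and> (\<forall>e\<in>E - C2. \<exists>p\<in>P1. e \<in> set (snd p))
      \<and> (\<forall>C\<in>cls1. card (fst (seg C) \<inter> R) = 1)
      \<and> S2 = seg ` cls2 \<and> S1 = seg ` cls1
      \<and> (\<forall>S\<in>S2 \<union> S1. \<forall>S'\<in>S2 \<union> S1. S \<noteq> S' \<longrightarrow>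
            snd S \<inter> snd S' = {} \<and> fst S \<inter> fst S' \<subseteq> R)
      \<and> (\<Union>S\<in>S2 \<union> S1. fst S) = V \<and> (\<Union>S\<in>S2 \<union> S1. snd S) = E)"

end

theory Submission
  imports Defs
begin

text \<open>A spanning tree T of X has card V - 1 edges. On a segment S with r ramified
vertices, T \<inter> S is a forest each of whose components contains a ramified vertex of S: a tree
walk starting at an unramified vertex of S can only leave S through a ramified vertex. So
T \<inter> S has c components with 1 \<le> c \<le> r, and card (T \<inter> S) = (unramified vertices of S) + (r - c).
The segments are edge-disjoint and share only ramified vertices, so summing over them gives
\<Sum> (r - c) = card R - 1. The defect r - c is 0 on a 1-segment, and on a 2-segment it is 1 exactly
when T \<inter> S is a spanning tree of S.\<close>

definition reachable :: "('e \<Rightarrow> 'v set) \<Rightarrow> 'e set \<Rightarrow> 'v \<Rightarrow> 'v \<Rightarrow> bool" where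
  "reachable ends F = (\<lambda>a b. \<exists>e\<in>F. ends e = {a, b})\<^sup>*\<^sup>*"

lemma equivp_reachable: "equivp (reachable ends F)"
  unfolding reachable_def by (rule equivp_rtranclp) (auto simp: symp_def insert_commute)

lemma reachable_refl [simp]: "reachable ends F a a"
  using equivp_reflp[OF equivp_reachable] .

lemma reachable_sym: "reachable ends F a b \<Longrightarrow> reachable ends F b a"
  using equivp_symp[OF equivp_reachable] .

lemma reachable_trans: "reachable ends F a b \<Longrightarrow> reachable ends F b c \<Longrightarrow> reachable ends F a c"
  using equivp_transp[OF equivp_reachable] .

lemma reachable_edge: "e \<in> F \<Longrightarrow> ends e = {a, b} \<Longrightarrow> reachable ends F a b"
  unfolding reachable_def by (rule r_into_rtranclp) blast

lemma reachable_mono: "F \<subseteq> G \<Longrightarrow> reachable ends F a b \<Longrightarrow> reachable ends G a b"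
  unfolding reachable_def by (erule rtranclp_mono[THEN predicate2D, rotated]) blast

lemma reachable_empty: "reachable ends {} a b \<longleftrightarrow> a = b"
  unfolding reachable_def by (auto elim: rtranclp.cases)

lemma reachable_insert_edge:
  assumes "ends e = {u, w}"
  shows "reachable ends (insert e F) x y \<longleftrightarrow> reachable ends F x y \<or>
    (reachable ends F x u \<and> reachable ends F w y) \<or> (reachable ends F x w \<and> reachable ends F u y)"
    (is "?lhs \<longleftrightarrow> ?rhs x y")
proof
  assume ?lhs
  then show "?rhs x y"
    unfolding reachable_def[of ends "insert e F"]
  proof (induction rule: rtranclp_induct)
    case (step y z)
    then obtain e' where e': "e' \<in> insert e F" "ends e' = {y, z}" by blast
    show ?case
    proof (cases "e' \<in> F")
      case True
      then show ?thesis using step.IH e' reachable_edge reachable_trans by meson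
    next
      case False
      with e' assms have "(y = u \<and> z = w) \<or> (y = w \<and> z = u)" by (auto simp: doubleton_eq_iff)
      then show ?thesis using step.IH reachable_sym reachable_refl by metis
    qed
  qed simp
next
  have uw: "reachable ends (insert e F) u w" using assms by (intro reachable_edge) simp_all
  have mono: "reachable ends (insert e F) a b" if "reachable ends F a b" for a b
    using that by (rule reachable_mono[rotated]) blast
  assume "?rhs x y"
  then show ?lhs using uw mono reachable_trans reachable_sym by metis
qed

lemma walk_Nil: "walk ends F vs [] \<longleftrightarrow> (\<exists>v. vs = [v])"
  unfolding walk_def by (auto simp: length_Suc_conv)

lemma walk_Cons:
  "walk ends F vs (e # es) \<longleftrightarrow>
     (\<exists>a vs'. vs = a # vs' \<and> e \<in> F \<and> ends e = {a, hd vs'} \<and> walk ends F vs' es)"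
  unfolding walk_def by (cases vs) (auto simp: All_less_Suc2 length_Suc_conv)

lemma walk_drop: "walk ends F vs es \<Longrightarrow> k \<le> length es \<Longrightarrow> walk ends F (drop k vs) (drop k es)"
  unfolding walk_def by (auto dest: in_set_dropD)

lemma walk_mono: "F \<subseteq> G \<Longrightarrow> walk ends F vs es \<Longrightarrow> walk ends G vs es"
  unfolding walk_def by blast

lemma walk_nonempty: "walk ends F vs es \<Longrightarrow> vs \<noteq> []"
  unfolding walk_def by auto

lemma walk_edge_ends: "walk ends F vs es \<Longrightarrow> e \<in> set es \<Longrightarrow> ends e \<subseteq> set vs"
proof (induction es arbitrary: vs)
  case (Cons e' es)
  then obtain a vs' where "vs = a # vs'" "ends e' = {a, hd vs'}" "walk ends F vs' es"
    by (auto simp: walk_Cons)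
  with Cons show ?case using walk_nonempty[of ends F vs' es] by auto
qed simp

lemma walk_vertices_subset:
  "walk ends F vs es \<Longrightarrow> \<forall>e\<in>F. ends e \<subseteq> W \<Longrightarrow> hd vs \<in> W \<Longrightarrow> set vs \<subseteq> W"
proof (induction es arbitrary: vs)
  case (Cons e es)
  then obtain a vs' where "vs = a # vs'" "e \<in> F" "ends e = {a, hd vs'}" "walk ends F vs' es"
    by (auto simp: walk_Cons)
  with Cons show ?case by auto
qed (auto simp: walk_Nil)

lemma distinct_walk_edges: "walk ends F vs es \<Longrightarrow> distinct vs \<Longrightarrow> distinct es"
proof (induction es arbitrary: vs)
  case (Cons e es)
  then obtain a vs' where vs: "vs = a # vs'" "ends e = {a, hd vs'}" "walk ends F vs' es"
    by (auto simp: walk_Cons)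
  have "e \<notin> set es"
    using walk_edge_ends[OF vs(3)] vs(1,2) Cons.prems(2) by auto
  with Cons vs show ?case by simp
qed simp

lemma walk_reachable: "walk ends F vs es \<Longrightarrow> reachable ends F (hd vs) (last vs)"
proof (induction es arbitrary: vs)
  case (Cons e es)
  then obtain a vs' where vs: "vs = a # vs'" "e \<in> F" "ends e = {a, hd vs'}" "walk ends F vs' es"
    by (auto simp: walk_Cons)
  have "reachable ends F a (hd vs')" using vs(2,3) by (rule reachable_edge)
  moreover have "reachable ends F (hd vs') (last vs')" using vs(4) by (rule Cons.IH)
  moreover have "last vs = last vs'" using vs(1) walk_nonempty[OF vs(4)] by simp
  ultimately show ?case using vs(1) reachable_trans by fastforce
qed (auto simp: walk_Nil)

lemma reachable_distinct_walk:
  "reachable ends F a b \<Longrightarrow> \<exists>vs es. walk ends F vs es \<and> hd vs = a \<and> last vs = b \<and> distinct vs"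
  unfolding reachable_def
proof (induction rule: converse_rtranclp_induct)
  case base
  have "walk ends F [b] []" by (simp add: walk_Nil)
  then show ?case by fastforce
next
  case (step a z)
  then obtain e vs es where e: "e \<in> F" "ends e = {a, z}"
    and w: "walk ends F vs es" "hd vs = z" "last vs = b" "distinct vs" by blast
  show ?case
  proof (cases "a \<in> set vs")
    case True
    then obtain k where k: "k < length vs" "vs ! k = a" by (auto simp: in_set_conv_nth)
    have "walk ends F (drop k vs) (drop k es)"
      using w(1) k(1) by (intro walk_drop) (auto simp: walk_def)
    moreover have "hd (drop k vs) = a" "last (drop k vs) = b" "distinct (drop k vs)"
      using k w by (simp_all add: hd_drop_conv_nth)
    ultimately show ?thesis by blast
  next
    case False
    have "walk ends F (a # vs) (e # es)" using e w by (auto simp: walk_Cons)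
    moreover have "last (a # vs) = b" using w walk_nonempty by fastforce
    moreover have "distinct (a # vs)" using False w(4) by simp
    ultimately show ?thesis by (intro exI[of _ "a # vs"] exI[of _ "e # es"]) simp
  qed
qed

definition forest :: "('e \<Rightarrow> 'v set) \<Rightarrow> 'e set \<Rightarrow> bool" where
  "forest ends F \<longleftrightarrow> \<not> (\<exists>vs es. closed_path ends F vs es)"

lemma forest_subset: "forest ends G \<Longrightarrow> F \<subseteq> G \<Longrightarrow> forest ends F"
  unfolding forest_def closed_path_def using walk_mono by blast

lemma forest_insert_not_reachable:
  assumes "forest ends (insert e F)" "e \<notin> F" "ends e = {u, w}"
  shows "\<not> reachable ends F u w"
proof
  assume "reachable ends F u w"
  then obtain vs es where w: "walk ends F vs es" "hd vs = w" "last vs = u" "distinct vs"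
    using reachable_distinct_walk reachable_sym by metis
  have "walk ends (insert e F) (u # vs) (e # es)"
    using w assms(3) walk_mono[of F "insert e F"] by (auto simp: walk_Cons insert_commute)
  moreover have "distinct (e # es)"
    using distinct_walk_edges[OF w(1,4)] w(1) assms(2) by (auto simp: walk_def)
  ultimately have "closed_path ends (insert e F) (u # vs) (e # es)"
    using w walk_nonempty by (fastforce simp: closed_path_def)
  then show False using assms(1) by (auto simp: forest_def)
qed

lemma multigraph_edgeE:
  assumes "multigraph V E ends" "e \<in> E"
  obtains a b where "ends e = {a, b}" "a \<in> V" "b \<in> V"
proof -
  have card: "card (ends e) = 1 \<or> card (ends e) = 2" and sub: "ends e \<subseteq> V"
    using assms by (auto simp: multigraph_def)
  from card obtain a b where "ends e = {a, b}"
    by (metis card_1_singletonE card_2_iff insert_absorb2)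
  with sub that show ?thesis by blast
qed

lemma multigraph_subgraph:
  "multigraph V E ends \<Longrightarrow> W \<subseteq> V \<Longrightarrow> F \<subseteq> E \<Longrightarrow> \<forall>e\<in>F. ends e \<subseteq> W \<Longrightarrow> multigraph W F ends"
  unfolding multigraph_def by (auto intro: finite_subset)

definition component :: "('e \<Rightarrow> 'v set) \<Rightarrow> 'e set \<Rightarrow> 'v set \<Rightarrow> 'v \<Rightarrow> 'v set" where
  "component ends F W v = {w \<in> W. reachable ends F v w}"

definition components :: "('e \<Rightarrow> 'v set) \<Rightarrow> 'e set \<Rightarrow> 'v set \<Rightarrow> 'v set set" where
  "components ends F W = component ends F W ` W"

lemma component_eq_iff:
  assumes "v' \<in> W"
  shows "component ends F W v = component ends F W v' \<longleftrightarrow> reachable ends F v v'"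
proof
  assume "component ends F W v = component ends F W v'"
  then have "v' \<in> component ends F W v" using assms by (simp add: component_def)
  then show "reachable ends F v v'" by (simp add: component_def)
qed (auto simp: component_def intro: reachable_trans reachable_sym)

lemma card_components_empty: "finite W \<Longrightarrow> card (components ends {} W) = card W"
proof -
  have "components ends {} W = (\<lambda>v. {v}) ` W"
    unfolding components_def component_def reachable_empty by auto
  then show "card (components ends {} W) = card W" by (simp add: card_image)
qed

lemma card_components_pos: "finite W \<Longrightarrow> W \<noteq> {} \<Longrightarrow> 0 < card (components ends F W)"
  unfolding components_def by (simp add: card_gt_0_iff)

lemma card_components_le:
  assumes "finite W" "Q \<subseteq> W" "\<forall>v\<in>W. \<exists>q\<in>Q. reachable ends F v q"
  shows "card (components ends F W) \<le> card Q"
proof -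
  have "components ends F W \<subseteq> component ends F W ` Q"
  proof
    fix c assume "c \<in> components ends F W"
    then obtain v where v: "v \<in> W" "c = component ends F W v" unfolding components_def by blast
    with assms(3) obtain q where q: "q \<in> Q" "reachable ends F v q" by blast
    moreover from q(1) assms(2) have "q \<in> W" by blast
    ultimately have "c = component ends F W q" using v(2) by (simp add: component_eq_iff)
    with q(1) show "c \<in> component ends F W ` Q" by blast
  qed
  then have "card (components ends F W) \<le> card (component ends F W ` Q)"
    using assms(1,2) by (intro card_mono) (auto intro: finite_subset)
  also have "\<dots> \<le> card Q" using assms(1,2) by (intro card_image_le) (auto intro: finite_subset)
  finally show ?thesis .
qed

lemma card_components_eq_1_iff:
  assumes "W \<noteq> {}"
  shows "card (components ends F W) = 1 \<longleftrightarrow> (\<forall>u\<in>W. \<forall>w\<in>W. reachable ends F u w)"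
proof -
  have "card (components ends F W) = 1 \<longleftrightarrow>
    (\<forall>u\<in>W. \<forall>w\<in>W. component ends F W u = component ends F W w)"
  proof
    assume "card (components ends F W) = 1"
    then obtain c where "component ends F W ` W = {c}"
      unfolding components_def by (auto simp: card_1_singleton_iff)
    then show "\<forall>u\<in>W. \<forall>w\<in>W. component ends F W u = component ends F W w" by blast
  next
    assume all: "\<forall>u\<in>W. \<forall>w\<in>W. component ends F W u = component ends F W w"
    obtain v where "v \<in> W" using assms by blast
    with all have "component ends F W ` W = {component ends F W v}" by blast
    then show "card (components ends F W) = 1" unfolding components_def by simp
  qed
  also have "\<dots> \<longleftrightarrow> (\<forall>u\<in>W. \<forall>w\<in>W. reachable ends F u w)"
    by (simp add: component_eq_iff)
  finally show ?thesis .
qed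

lemma connected_on_iff_reachable:
  assumes "\<forall>e\<in>F. ends e \<subseteq> W"
  shows "connected_on ends W F \<longleftrightarrow> (\<forall>u\<in>W. \<forall>w\<in>W. reachable ends F u w)"
proof
  assume "connected_on ends W F"
  then show "\<forall>u\<in>W. \<forall>w\<in>W. reachable ends F u w"
    unfolding connected_on_def by (metis walk_reachable)
next
  assume reach: "\<forall>u\<in>W. \<forall>w\<in>W. reachable ends F u w"
  show "connected_on ends W F"
    unfolding connected_on_def
  proof (intro ballI)
    fix u w assume "u \<in> W" "w \<in> W"
    with reach obtain vs es where "walk ends F vs es" "hd vs = u" "last vs = w"
      using reachable_distinct_walk by metis
    with \<open>u \<in> W\<close> show "\<exists>vs es. walk ends F vs es \<and> set vs \<subseteq> W \<and> hd vs = u \<and> last vs = w"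
      using walk_vertices_subset assms by metis
  qed
qed

lemma component_insert_edge_merge:
  assumes "ends e = {u, w}" "\<not> reachable ends F u w"
    and "reachable ends F v u \<or> reachable ends F v w"
  shows "component ends (insert e F) W v = component ends F W u \<union> component ends F W w"
proof -
  have "reachable ends (insert e F) v y \<longleftrightarrow> reachable ends F u y \<or> reachable ends F w y" for y
    using reachable_insert_edge[of ends e u w F v y, OF assms(1)] assms(2,3)
      reachable_trans reachable_sym
    by metis
  then show ?thesis unfolding component_def by auto
qed

lemma component_insert_edge_other:
  assumes "ends e = {u, w}" "\<not> reachable ends F v u" "\<not> reachable ends F v w"
  shows "component ends (insert e F) W v = component ends F W v"
  using assms(2,3) reachable_insert_edge[of ends e u w F v, OF assms(1)]
  unfolding component_def by auto

lemma components_insert_edge: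
  assumes "u \<in> W" "w \<in> W" "ends e = {u, w}" "\<not> reachable ends F u w"
  defines "cu \<equiv> component ends F W u" and "cw \<equiv> component ends F W w"
  shows "components ends (insert e F) W = insert (cu \<union> cw) (components ends F W - {cu, cw})"
proof -
  note merge = component_insert_edge_merge[of ends e u w F _ W, OF assms(3,4), folded cu_def cw_def]
  note other = component_insert_edge_other[of ends e u w F _ W, OF assms(3)]
  have old: "component ends F W v \<notin> {cu, cw} \<longleftrightarrow> \<not> reachable ends F v u \<and> \<not> reachable ends F v w"
    for v unfolding cu_def cw_def using assms(1,2) by (simp add: component_eq_iff)
  show ?thesis
    unfolding components_def
  proof (intro equalityI subsetI)
    fix c assume "c \<in> component ends (insert e F) W ` W"
    then obtain v where v: "v \<in> W" "c = component ends (insert e F) W v" by blast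
    show "c \<in> insert (cu \<union> cw) (component ends F W ` W - {cu, cw})"
    proof (cases "reachable ends F v u \<or> reachable ends F v w")
      case True
      then show ?thesis using merge v(2) by simp
    next
      case False
      then have "c = component ends F W v" "c \<notin> {cu, cw}" using other old v(2) by auto
      then show ?thesis using v(1) by blast
    qed
  next
    fix c assume "c \<in> insert (cu \<union> cw) (component ends F W ` W - {cu, cw})"
    then consider "c = cu \<union> cw" | v where "v \<in> W" "c = component ends F W v" "c \<notin> {cu, cw}"
      by blast
    then show "c \<in> component ends (insert e F) W ` W"
    proof cases
      case 1
      then have "c = component ends (insert e F) W u" using merge[of u] by simp
      then show ?thesis using assms(1) by blast
    next
      case 2
      then have "c = component ends (insert e F) W v" using other old by metis
      then show ?thesis using \<open>v \<in> W\<close> by blast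
    qed
  qed
qed

lemma card_components_insert_edge:
  assumes "finite W" "u \<in> W" "w \<in> W" "ends e = {u, w}" "\<not> reachable ends F u w"
  shows "card (components ends (insert e F) W) + 1 = card (components ends F W)"
proof -
  define cu cw where "cu = component ends F W u" and "cw = component ends F W w"
  have cu_cw: "{cu, cw} \<subseteq> components ends F W" "cu \<noteq> cw"
    using assms(2,3,5) unfolding components_def cu_def cw_def by (auto simp: component_eq_iff)
  have "cu \<union> cw \<notin> components ends F W"
  proof
    assume "cu \<union> cw \<in> components ends F W"
    then obtain v where v: "cu \<union> cw = component ends F W v" unfolding components_def by blast
    have "u \<in> cu \<union> cw" "w \<in> cu \<union> cw"
      using assms(2,3) by (simp_all add: cu_def cw_def component_def)
    then have "reachable ends F v u" "reachable ends F v w"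
      unfolding v by (simp_all add: component_def)
    then show False using assms(5) reachable_trans reachable_sym by metis
  qed
  moreover have fin: "finite (components ends F W)" using assms(1) by (simp add: components_def)
  moreover have "card {cu, cw} \<le> card (components ends F W)" using fin cu_cw(1) by (rule card_mono)
  ultimately show ?thesis
    using cu_cw components_insert_edge[OF assms(2-5)] by (simp add: cu_def cw_def card_Diff_subset)
qed

lemma forest_card_components:
  assumes "multigraph W F ends" "forest ends F"
  shows "card F + card (components ends F W) = card W"
proof -
  have "finite F" using assms(1) by (simp add: multigraph_def)
  then show ?thesis using assms
  proof (induction F rule: finite_induct)
    case empty
    then show ?case by (simp add: card_components_empty multigraph_def)
  next
    case (insert e F)
    obtain u w where uw: "ends e = {u, w}" "u \<in> W" "w \<in> W"
      by (rule multigraph_edgeE[OF insert.prems(1) insertI1])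
    have "multigraph W F ends" using insert.prems(1) by (simp add: multigraph_def)
    moreover have "forest ends F" using insert.prems(2) by (rule forest_subset) blast
    ultimately have IH: "card F + card (components ends F W) = card W" by (rule insert.IH)
    have "\<not> reachable ends F u w"
      using insert.prems(2) insert.hyps(2) uw(1) by (rule forest_insert_not_reachable)
    then have "card (components ends (insert e F) W) + 1 = card (components ends F W)"
      using insert.prems(1) uw by (intro card_components_insert_edge) (simp_all add: multigraph_def)
    with IH insert.hyps show ?case by simp
  qed
qed

lemma is_tree_iff_card_components:
  assumes "multigraph W F ends" "W \<noteq> {}" "forest ends F"
  shows "is_tree ends W F \<longleftrightarrow> card (components ends F W) = 1"
proof -
  have edges: "\<forall>e\<in>F. ends e \<subseteq> W" using assms(1) by (simp add: multigraph_def)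
  then have "is_tree ends W F \<longleftrightarrow> connected_on ends W F"
    using assms(3) by (simp add: is_tree_def forest_def)
  also have "\<dots> \<longleftrightarrow> (\<forall>u\<in>W. \<forall>w\<in>W. reachable ends F u w)"
    using edges by (rule connected_on_iff_reachable)
  also have "\<dots> \<longleftrightarrow> card (components ends F W) = 1"
    using assms(2) by (rule card_components_eq_1_iff[symmetric])
  finally show ?thesis .
qed

lemma tree_card_edges:
  assumes "multigraph W F ends" "W \<noteq> {}" "is_tree ends W F"
  shows "card F + 1 = card W"
proof -
  have forest: "forest ends F" using assms(3) by (simp add: is_tree_def forest_def)
  then have "card (components ends F W) = 1"
    using is_tree_iff_card_components[OF assms(1,2)] assms(3) by blast
  then show ?thesis using forest_card_components[OF assms(1) forest] by simp
qed

definition segment_cover ::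
  "'v set \<Rightarrow> 'e set \<Rightarrow> ('e \<Rightarrow> 'v set) \<Rightarrow> 'v set \<Rightarrow> ('v set \<times> 'e set) set \<Rightarrow> bool" where
  "segment_cover V E ends R Segs \<longleftrightarrow>
     (\<forall>S\<in>Segs. (\<forall>e\<in>snd S. ends e \<subseteq> fst S) \<and> fst S \<inter> R \<noteq> {}) \<and>
     (\<forall>S\<in>Segs. \<forall>S'\<in>Segs. S \<noteq> S' \<longrightarrow> snd S \<inter> snd S' = {} \<and> fst S \<inter> fst S' \<subseteq> R) \<and>
     (\<Union>S\<in>Segs. fst S) = V \<and> (\<Union>S\<in>Segs. snd S) = E"

locale segmented_spanning_tree =
  fixes V :: "'v set" and E :: "'e set" and ends :: "'e \<Rightarrow> 'v set"
    and R :: "'v set" and Segs :: "('v set \<times> 'e set) set" and T :: "'e set"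
  assumes multigraph: "multigraph V E ends"
    and ramified_subset: "R \<subseteq> V"
    and segment_cover: "segment_cover V E ends R Segs"
    and tree_subset: "T \<subseteq> E"
    and spanning_tree: "is_tree ends V T"
begin

lemma segment_edge_ends: "S \<in> Segs \<Longrightarrow> e \<in> snd S \<Longrightarrow> ends e \<subseteq> fst S"
  using segment_cover by (simp add: segment_cover_def)

lemma segment_meets_ramified: "S \<in> Segs \<Longrightarrow> fst S \<inter> R \<noteq> {}"
  using segment_cover by (simp add: segment_cover_def)

lemma segments_disjoint:
  "S \<in> Segs \<Longrightarrow> S' \<in> Segs \<Longrightarrow> S \<noteq> S' \<Longrightarrow> snd S \<inter> snd S' = {} \<and> fst S \<inter> fst S' \<subseteq> R"
  using segment_cover by (simp add: segment_cover_def)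

lemma segments_cover: "(\<Union>S\<in>Segs. fst S) = V" "(\<Union>S\<in>Segs. snd S) = E"
  using segment_cover by (simp_all add: segment_cover_def)

lemma finite_segments: "finite Segs"
proof (rule finite_subset)
  show "Segs \<subseteq> Pow V \<times> Pow E"
  proof
    fix S assume "S \<in> Segs"
    then have "fst S \<subseteq> V" "snd S \<subseteq> E" using segments_cover by blast+
    then show "S \<in> Pow V \<times> Pow E" by (simp add: mem_Times_iff)
  qed
  show "finite (Pow V \<times> Pow E)" using multigraph by (simp add: multigraph_def)
qed

lemma edge_at_unramified_vertex:
  assumes "e \<in> E" "S \<in> Segs" "x \<in> ends e" "x \<in> fst S - R"
  shows "e \<in> snd S"
proof -
  obtain S' where S': "S' \<in> Segs" "e \<in> snd S'" using assms(1) segments_cover(2) by blast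
  then have "x \<in> fst S'" using assms(3) segment_edge_ends by blast
  then have "S' = S" using assms(2,4) S'(1) segments_disjoint by blast
  with S' show ?thesis by simp
qed

lemma walk_reaches_ramified_in_segment:
  assumes "walk ends T vs es" "S \<in> Segs" "hd vs \<in> fst S" "last vs \<in> R"
  shows "\<exists>r\<in>fst S \<inter> R. reachable ends (T \<inter> snd S) (hd vs) r"
  using assms(1,3,4)
proof (induction es arbitrary: vs)
  case Nil
  then show ?case by (force simp: walk_Nil)
next
  case (Cons e es)
  then obtain a vs' where vs: "vs = a # vs'" "e \<in> T" "ends e = {a, hd vs'}" "walk ends T vs' es"
    by (auto simp: walk_Cons)
  show ?case
  proof (cases "a \<in> R")
    case True
    then show ?thesis using vs(1) Cons.prems(2) reachable_refl by fastforce
  next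
    case False
    then have "e \<in> snd S"
      using vs Cons.prems(2) tree_subset assms(2) by (intro edge_at_unramified_vertex) auto
    moreover have "last vs' \<in> R" using Cons.prems(3) vs(1) walk_nonempty[OF vs(4)] by simp
    ultimately obtain r where r: "r \<in> fst S \<inter> R" "reachable ends (T \<inter> snd S) (hd vs') r"
      using Cons.IH[OF vs(4)] segment_edge_ends[OF assms(2)] vs(3) by blast
    have "reachable ends (T \<inter> snd S) a (hd vs')"
      using vs(2,3) \<open>e \<in> snd S\<close> by (intro reachable_edge) auto
    then have "reachable ends (T \<inter> snd S) a r" using r(2) by (rule reachable_trans)
    with r(1) vs(1) show ?thesis by auto
  qed
qed

lemma segment_vertex_reaches_ramified:
  assumes "S \<in> Segs" "v \<in> fst S"
  shows "\<exists>r\<in>fst S \<inter> R. reachable ends (T \<inter> snd S) v r"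
proof -
  obtain r0 where r0: "r0 \<in> fst S \<inter> R" using segment_meets_ramified[OF assms(1)] by blast
  have "v \<in> V" "r0 \<in> V" using assms r0 segments_cover(1) by auto
  moreover have "connected_on ends V T" using spanning_tree by (simp add: is_tree_def)
  ultimately obtain vs es where "walk ends T vs es" "hd vs = v" "last vs = r0"
    unfolding connected_on_def by blast
  with assms r0 show ?thesis using walk_reaches_ramified_in_segment by blast
qed

lemma segment_multigraph:
  assumes "S \<in> Segs"
  shows "multigraph (fst S) (T \<inter> snd S) ends"
proof (rule multigraph_subgraph[OF multigraph])
  show "fst S \<subseteq> V" using assms segments_cover(1) by blast
  show "T \<inter> snd S \<subseteq> E" using tree_subset by blast
  show "\<forall>e\<in>T \<inter> snd S. ends e \<subseteq> fst S" using assms segment_edge_ends by blast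
qed

lemma segment_forest: "forest ends (T \<inter> snd S)"
proof -
  have "forest ends T" using spanning_tree by (simp add: is_tree_def forest_def)
  then show ?thesis by (rule forest_subset) blast
qed

lemma card_segment_components:
  assumes "S \<in> Segs"
  shows "0 < card (components ends (T \<inter> snd S) (fst S))"
    and "card (components ends (T \<inter> snd S) (fst S)) \<le> card (fst S \<inter> R)"
proof -
  have "finite (fst S)" using segment_multigraph[OF assms] by (simp add: multigraph_def)
  moreover have "fst S \<noteq> {}" using segment_meets_ramified[OF assms] by blast
  ultimately show "0 < card (components ends (T \<inter> snd S) (fst S))"
    by (rule card_components_pos)
  show "card (components ends (T \<inter> snd S) (fst S)) \<le> card (fst S \<inter> R)"
    using \<open>finite (fst S)\<close> segment_vertex_reaches_ramified[OF assms]
    by (intro card_components_le) auto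
qed

lemma card_segment_tree_edges:
  assumes "S \<in> Segs"
  shows "card (T \<inter> snd S) =
    card (fst S - R) + (card (fst S \<inter> R) - card (components ends (T \<inter> snd S) (fst S)))"
proof -
  have "card (T \<inter> snd S) + card (components ends (T \<inter> snd S) (fst S)) = card (fst S)"
    using segment_multigraph[OF assms] segment_forest by (rule forest_card_components)
  moreover have "card (fst S) = card (fst S \<inter> R) + card (fst S - R)"
    using segment_multigraph[OF assms] by (simp add: card_Int_Diff multigraph_def)
  moreover note card_segment_components(2)[OF assms]
  ultimately show ?thesis by linarith
qed

lemma card_tree_eq_sum_segments: "card T = (\<Sum>S\<in>Segs. card (T \<inter> snd S))"
proof -
  have "T = (\<Union>S\<in>Segs. T \<inter> snd S)" using tree_subset segments_cover(2) by blast
  then have "card T = card (\<Union>S\<in>Segs. T \<inter> snd S)" by simp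
  also have "\<dots> = (\<Sum>S\<in>Segs. card (T \<inter> snd S))"
  proof (rule card_UN_disjoint[OF finite_segments])
    show "\<forall>S\<in>Segs. finite (T \<inter> snd S)"
      using multigraph tree_subset by (auto simp: multigraph_def intro: finite_subset)
    show "\<forall>S\<in>Segs. \<forall>S'\<in>Segs. S \<noteq> S' \<longrightarrow> (T \<inter> snd S) \<inter> (T \<inter> snd S') = {}"
      using segments_disjoint by blast
  qed
  finally show ?thesis .
qed

lemma card_unramified_eq_sum_segments: "card (V - R) = (\<Sum>S\<in>Segs. card (fst S - R))"
proof -
  have "V - R = (\<Union>S\<in>Segs. fst S - R)" using segments_cover(1) by blast
  then have "card (V - R) = card (\<Union>S\<in>Segs. fst S - R)" by simp
  also have "\<dots> = (\<Sum>S\<in>Segs. card (fst S - R))"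
  proof (rule card_UN_disjoint[OF finite_segments])
    show "\<forall>S\<in>Segs. finite (fst S - R)"
      using segment_multigraph by (simp add: multigraph_def)
    show "\<forall>S\<in>Segs. \<forall>S'\<in>Segs. S \<noteq> S' \<longrightarrow> (fst S - R) \<inter> (fst S' - R) = {}"
      using segments_disjoint by blast
  qed
  finally show ?thesis .
qed

lemma sum_segment_defects:
  "(\<Sum>S\<in>Segs. card (fst S \<inter> R) - card (components ends (T \<inter> snd S) (fst S))) = card R - 1"
proof (cases "R = {}")
  case True
  then have "Segs = {}" using segment_meets_ramified by blast
  with True show ?thesis by simp
next
  case False
  let ?defect = "\<lambda>S. card (fst S \<inter> R) - card (components ends (T \<inter> snd S) (fst S))"
  have "card T = (\<Sum>S\<in>Segs. card (fst S - R) + ?defect S)"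
    unfolding card_tree_eq_sum_segments using card_segment_tree_edges by (rule sum.cong[OF refl])
  then have "card T = card (V - R) + (\<Sum>S\<in>Segs. ?defect S)"
    by (simp add: sum.distrib card_unramified_eq_sum_segments)
  moreover have "card T + 1 = card V"
  proof (rule tree_card_edges[OF _ _ spanning_tree])
    show "multigraph V T ends"
      using multigraph_subgraph[OF multigraph subset_refl tree_subset] spanning_tree
      by (simp add: is_tree_def)
    show "V \<noteq> {}" using False ramified_subset by blast
  qed
  moreover have "card V = card (V - R) + card R"
    using multigraph ramified_subset card_Int_Diff[of V R] by (simp add: Int_absorb1 multigraph_def)
  ultimately show ?thesis by simp
qed

lemma card_tree_segments_with_two_ramified:
  assumes "\<forall>S\<in>Segs. card (fst S \<inter> R) = 1 \<or> card (fst S \<inter> R) = 2"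
  shows "card {S \<in> Segs. card (fst S \<inter> R) = 2 \<and> is_tree ends (fst S) (T \<inter> snd S)} = card R - 1"
proof -
  let ?P = "\<lambda>S. card (fst S \<inter> R) = 2 \<and> is_tree ends (fst S) (T \<inter> snd S)"
  have defect: "card (fst S \<inter> R) - card (components ends (T \<inter> snd S) (fst S)) = (if ?P S then 1 else 0)"
    if "S \<in> Segs" for S
  proof -
    have "is_tree ends (fst S) (T \<inter> snd S) \<longleftrightarrow> card (components ends (T \<inter> snd S) (fst S)) = 1"
      using segment_multigraph[OF that] _ segment_forest
      by (rule is_tree_iff_card_components) (use segment_meets_ramified[OF that] in blast)
    then show ?thesis using card_segment_components[OF that] assms that by auto
  qed
  have "card {S \<in> Segs. ?P S} = (\<Sum>S\<in>Segs. if ?P S then 1 else 0)"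
    using finite_segments by (simp add: sum.inter_filter[symmetric])
  also have "\<dots> = (\<Sum>S\<in>Segs. card (fst S \<inter> R) - card (components ends (T \<inter> snd S) (fst S)))"
    using defect by simp
  also have "\<dots> = card R - 1" by (rule sum_segment_defects)
  finally show ?thesis .
qed

end

lemma colour_classes_subset: "C \<in> colour_classes P \<Longrightarrow> C \<subseteq> P"
proof -
  have "(share_rel P)\<^sup>+ \<subseteq> P \<times> P" by (rule trancl_subset_Sigma) (auto simp: share_rel_def)
  then show "C \<in> colour_classes P \<Longrightarrow> C \<subseteq> P" unfolding colour_classes_def quotient_def by blast
qed

lemma seg_edge_ends:
  assumes "C \<in> colour_classes P" "\<forall>p\<in>P. walk ends E (fst p) (snd p)" "e \<in> snd (seg C)"
  shows "ends e \<subseteq> fst (seg C)"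
proof -
  obtain p where p: "p \<in> C" "e \<in> set (snd p)" using assms(3) by (auto simp: seg_def)
  have "walk ends E (fst p) (snd p)"
    using p(1) assms(2) colour_classes_subset[OF assms(1)] by blast
  then have "ends e \<subseteq> set (fst p)" using p(2) by (rule walk_edge_ends)
  with p(1) show ?thesis by (auto simp: seg_def)
qed

lemma segment_decompositionE:
  assumes "segment_decomposition V E ends R S2 S1"
  obtains P1 where
    "S2 = seg ` colour_classes (adm2 ends E R)" "S1 = seg ` colour_classes P1"
    "\<forall>C\<in>colour_classes (adm2 ends E R). card (fst (seg C) \<inter> R) = 2"
    "\<forall>C\<in>colour_classes P1. card (fst (seg C) \<inter> R) = 1"
    "\<forall>S\<in>S2 \<union> S1. \<forall>S'\<in>S2 \<union> S1. S \<noteq> S' \<longrightarrow> snd S \<inter> snd S' = {} \<and> fst S \<inter> fst S' \<subseteq> R"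
    "(\<Union>S\<in>S2 \<union> S1. fst S) = V" "(\<Union>S\<in>S2 \<union> S1. snd S) = E"
    "\<forall>p\<in>P1. closed_path ends E (fst p) (snd p)"
proof -
  let ?P1 = "{(vs, es). closed_path ends E vs es \<and> hd vs \<in> R \<and>
    inner vs \<subseteq> V - R - (\<Union>p\<in>adm2 ends E R. set (fst p)) \<and>
    set es \<inter> (\<Union>p\<in>adm2 ends E R. set (snd p)) = {}}"
  have "\<forall>p\<in>?P1. closed_path ends E (fst p) (snd p)" by auto
  with assms show thesis
    unfolding segment_decomposition_def Let_def by (elim conjE) (rule that, assumption+)
qed

lemma segment_decomposition_ramified:
  assumes "segment_decomposition V E ends R S2 S1"
  shows "\<forall>S\<in>S2. card (fst S \<inter> R) = 2" and "\<forall>S\<in>S1. card (fst S \<inter> R) = 1"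
proof -
  obtain P1 where "S2 = seg ` colour_classes (adm2 ends E R)" "S1 = seg ` colour_classes P1"
    "\<forall>C\<in>colour_classes (adm2 ends E R). card (fst (seg C) \<inter> R) = 2"
    "\<forall>C\<in>colour_classes P1. card (fst (seg C) \<inter> R) = 1"
    using assms by (elim segment_decompositionE) blast
  then show "\<forall>S\<in>S2. card (fst S \<inter> R) = 2" and "\<forall>S\<in>S1. card (fst S \<inter> R) = 1" by auto
qed

lemma segment_decomposition_cover:
  assumes "segment_decomposition V E ends R S2 S1"
  shows "segment_cover V E ends R (S2 \<union> S1)"
proof -
  obtain P1 where S2: "S2 = seg ` colour_classes (adm2 ends E R)"
    and S1: "S1 = seg ` colour_classes P1"
    and disjoint: "\<forall>S\<in>S2 \<union> S1. \<forall>S'\<in>S2 \<union> S1. S \<noteq> S' \<longrightarrow> snd S \<inter> snd S' = {} \<and> fst S \<inter> fst S' \<subseteq> R"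
    and cover: "(\<Union>S\<in>S2 \<union> S1. fst S) = V" "(\<Union>S\<in>S2 \<union> S1. snd S) = E"
    and closed: "\<forall>p\<in>P1. closed_path ends E (fst p) (snd p)"
    using assms by (elim segment_decompositionE) blast
  have walks: "\<forall>p\<in>adm2 ends E R \<union> P1. walk ends E (fst p) (snd p)"
    using closed by (auto simp: adm2_def open_path_def closed_path_def)
  have "ends e \<subseteq> fst S" if "S \<in> S2 \<union> S1" "e \<in> snd S" for S e
  proof -
    from that(1) obtain C P where C: "C \<in> colour_classes P" "S = seg C"
      and P: "\<forall>p\<in>P. walk ends E (fst p) (snd p)"
      using S2 S1 walks by blast
    show ?thesis using seg_edge_ends[OF C(1) P] that(2) C(2) by simp
  qed
  moreover have "fst S \<inter> R \<noteq> {}" if "S \<in> S2 \<union> S1" for S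
  proof -
    have "card (fst S \<inter> R) \<noteq> 0" using segment_decomposition_ramified[OF assms] that by auto
    then show ?thesis by force
  qed
  ultimately show ?thesis unfolding segment_cover_def using disjoint cover by blast
qed

theorem lemma5p10:
  fixes V :: "'v set" and E :: "'e set" and ends :: "'e \<Rightarrow> 'v set"
    and R :: "'v set" and l :: nat
    and S2 S1 :: "('v set \<times> 'e set) set" and T :: "'e set"
  assumes "multigraph V E ends"
    and "connected_on ends V E"
    and "R \<subseteq> V"
    and "\<forall>u\<in>V. \<not> is_tail E ends R u"
    and "card R = l"
    and "segment_decomposition V E ends R S2 S1"
    and "T \<subseteq> E"
    and "is_tree ends V T"
  shows "card {S \<in> S2. is_tree ends (fst S) (T \<inter> snd S)} = l - 1"
proof -
  interpret segmented_spanning_tree V E ends R "S2 \<union> S1" T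
    using assms(1,3,7,8) segment_decomposition_cover[OF assms(6)] by unfold_locales
  note ramified = segment_decomposition_ramified[OF assms(6)]
  have "{S \<in> S2. is_tree ends (fst S) (T \<inter> snd S)} =
    {S \<in> S2 \<union> S1. card (fst S \<inter> R) = 2 \<and> is_tree ends (fst S) (T \<inter> snd S)}"
    using ramified by force
  also have "card \<dots> = card R - 1"
    using ramified by (intro card_tree_segments_with_two_ramified) auto
  finally show ?thesis using assms(5) by simp
qed

end
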